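(* For the grid graph $G=P_s \times P_t$ with $s\ge t\ge2$, $\dim_{1,f}(G)=\dim_f(G)$ if and only if $G\in\{P_2 \times P_2, P_3\times P_2, P_4\times P_2, P_3 \times P_3\}$.
   Context: $P_n$ is the path on $n$ vertices and $\times$ denotes the Cartesian product. $d(x,y)$ is the distance in $G$. For a function $g$ on $V(G)$ and $U\subseteq V(G)$, $g(U)=\sum_{s\in U}g(s)$. $R\{x,y\}=\{z: d(x,z)\ne d(y,z)\}$; $g:V(G)\to[0,1]$ is a resolving function if $g(R\{x,y\})\ge1$ for all distinct $x,y$, and $\dim_f(G)$ is the minimum of $g(V(G))$ over resolving functions. $d_1(x,y)=\min\{d(x,y),2\}$, $R_1\{x,y\}=\{z: d_1(x,z)\neq d_1(y,z)\}$; $h:V(G)\to[0,1]$ is a $1$-truncated resolving function if $h(R_1\{x,y\})\ge 1$ for all distinct $x,y$, and $\dim_{1,f}(G)$ is the minimum of $h(V(G))$ over such $h$. *)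

theory Defs
  imports Main "HOL-Library.Extended_Real" Complex_Main
begin

fun walk_n :: "('a \<Rightarrow> 'a \<Rightarrow> bool) \<Rightarrow> nat \<Rightarrow> 'a \<Rightarrow> 'a \<Rightarrow> bool" where
  "walk_n E 0 x y = (x = y)"
| "walk_n E (Suc n) x y = (\<exists>z. E x z \<and> walk_n E n z y)"

text \<open>Graph distance: length of a shortest walk (graphs considered here are connected).\<close>
definition gdist :: "('a \<Rightarrow> 'a \<Rightarrow> bool) \<Rightarrow> 'a \<Rightarrow> 'a \<Rightarrow> nat" where
  "gdist E x y = (LEAST n. walk_n E n x y)"

definition path_V :: "nat \<Rightarrow> nat set" where
  "path_V n = {0..<n}"
definition path_E :: "nat \<Rightarrow> nat \<Rightarrow> nat \<Rightarrow> bool" where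
  "path_E n i j = (i < n \<and> j < n \<and> (i = j + 1 \<or> j = i + 1))"

definition cart_V :: "'a set \<Rightarrow> 'b set \<Rightarrow> ('a \<times> 'b) set" where
  "cart_V V1 V2 = V1 \<times> V2"
definition cart_E :: "'a set \<Rightarrow> ('a \<Rightarrow> 'a \<Rightarrow> bool) \<Rightarrow> 'b set \<Rightarrow> ('b \<Rightarrow> 'b \<Rightarrow> bool)
                      \<Rightarrow> ('a \<times> 'b) \<Rightarrow> ('a \<times> 'b) \<Rightarrow> bool" where
  "cart_E V1 E1 V2 E2 p q =
     (p \<in> V1 \<times> V2 \<and> q \<in> V1 \<times> V2 \<and>
      ((fst p = fst q \<and> E2 (snd p) (snd q)) \<or> (snd p = snd q \<and> E1 (fst p) (fst q))))"

definition grid_V :: "nat \<Rightarrow> nat \<Rightarrow> (nat \<times> nat) set" where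
  "grid_V s t = cart_V (path_V s) (path_V t)"
definition grid_E :: "nat \<Rightarrow> nat \<Rightarrow> (nat \<times> nat) \<Rightarrow> (nat \<times> nat) \<Rightarrow> bool" where
  "grid_E s t = cart_E (path_V s) (path_E s) (path_V t) (path_E t)"

definition R_set :: "'a set \<Rightarrow> ('a \<Rightarrow> 'a \<Rightarrow> nat) \<Rightarrow> 'a \<Rightarrow> 'a \<Rightarrow> 'a set" where
  "R_set V d x y = {z \<in> V. d x z \<noteq> d y z}"

definition resolving_fun :: "'a set \<Rightarrow> ('a \<Rightarrow> 'a \<Rightarrow> nat) \<Rightarrow> ('a \<Rightarrow> real) \<Rightarrow> bool" where
  "resolving_fun V d g =
     ((\<forall>v\<in>V. 0 \<le> g v \<and> g v \<le> 1) \<and>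
      (\<forall>x\<in>V. \<forall>y\<in>V. x \<noteq> y \<longrightarrow> sum g (R_set V d x y) \<ge> 1))"

definition frac_dim_wrt :: "'a set \<Rightarrow> ('a \<Rightarrow> 'a \<Rightarrow> nat) \<Rightarrow> real" where
  "frac_dim_wrt V d = Inf {sum g V | g. resolving_fun V d g}"

definition frac_dim :: "'a set \<Rightarrow> ('a \<Rightarrow> 'a \<Rightarrow> bool) \<Rightarrow> real" where
  "frac_dim V E = frac_dim_wrt V (gdist E)"

definition frac_dim1 :: "'a set \<Rightarrow> ('a \<Rightarrow> 'a \<Rightarrow> bool) \<Rightarrow> real" where
  "frac_dim1 V E = frac_dim_wrt V (\<lambda>x y. min (gdist E x y) 2)"

end

theory Submission
  imports Defs
begin

text \<open>The distance of \<open>P\<^sub>s \<times> P\<^sub>t\<close> is the Manhattan distance. For \<open>s, t \<ge> 2\<close> the two ends of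
  a side of the grid resolve it, so \<open>dim\<^sub>f \<le> 2\<close>; conversely, the pair \<open>{(1,0), (0,1)}\<close> and its
  mirror images at the other three corners, each with weight \<open>1/2\<close>, form a packing of vertex
  pairs in which every vertex resolves total weight at most \<open>1\<close>, so by LP duality \<open>dim\<^sub>f = 2\<close>.
  Truncating the distance at \<open>2\<close> only shrinks the sets \<open>R{x,y}\<close>, hence \<open>dim\<^sub>f \<le> dim\<^sub>1\<^sub>,\<^sub>f\<close>.
  For the truncated distance the pairs \<open>{(1,0), (0,1)}\<close>, \<open>{(0,0), (0,1)}\<close>, \<open>{(0,0), (1,1)}\<close> with
  weights \<open>1/4, 1/4, 1/8\<close>, mirrored to all four corners, have total weight \<open>5/2\<close>; their load
  stays at most \<open>1\<close> at every vertex except in the four listed grids, which instead admit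
  resolving functions of weight \<open>2\<close>.\<close>

definition manhattan :: "nat \<times> nat \<Rightarrow> nat \<times> nat \<Rightarrow> nat" where
  "manhattan p q = (fst p - fst q) + (fst q - fst p) + (snd p - snd q) + (snd q - snd p)"

lemma manhattan_triangle: "manhattan x y \<le> manhattan x z + manhattan z y"
proof -
  have tri: "(a - c) + (c - a) \<le> ((a - b) + (b - a)) + ((b - c) + (c - b))" for a b c :: nat
    by linarith
  show ?thesis
    using add_mono[OF tri[where a = "fst x" and b = "fst z" and c = "fst y"]
                   tri[where a = "snd x" and b = "snd z" and c = "snd y"]]
    unfolding manhattan_def by (simp only: ac_simps)
qed

lemma manhattan_self [simp]: "manhattan x x = 0"
  unfolding manhattan_def by simp

lemma manhattan_eq_0_iff [simp]: "manhattan x y = 0 \<longleftrightarrow> x = y"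
  unfolding manhattan_def by (cases x; cases y) auto

lemma grid_V_eq: "grid_V s t = {..<s} \<times> {..<t}"
  unfolding grid_V_def cart_V_def path_V_def by auto

lemma mem_grid_V_iff: "p \<in> grid_V s t \<longleftrightarrow> fst p < s \<and> snd p < t"
  by (cases p) (simp add: grid_V_eq)

lemma finite_grid_V [simp]: "finite (grid_V s t)"
  by (simp add: grid_V_eq)

lemma grid_E_iff: "grid_E s t p q \<longleftrightarrow> p \<in> grid_V s t \<and> q \<in> grid_V s t \<and> manhattan p q = 1"
  by (cases p; cases q)
    (auto simp: grid_E_def cart_E_def grid_V_def cart_V_def path_V_def path_E_def manhattan_def)

lemma walk_n_grid_imp_manhattan_le: "walk_n (grid_E s t) n x y \<Longrightarrow> manhattan x y \<le> n"
proof (induction n arbitrary: x)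
  case (Suc n)
  then obtain z where z: "grid_E s t x z" "walk_n (grid_E s t) n z y" by auto
  from z(1) have "manhattan x z = 1" by (simp add: grid_E_iff)
  moreover from z(2) have "manhattan z y \<le> n" by (rule Suc.IH)
  ultimately show ?case using manhattan_triangle[of x y z] by simp
qed simp

lemma grid_step_towards:
  assumes "x \<in> grid_V s t" "y \<in> grid_V s t" "manhattan x y = Suc n"
  obtains z where "grid_E s t x z" "z \<in> grid_V s t" "manhattan z y = n"
proof -
  obtain a b c e where xy: "x = (a, b)" "y = (c, e)" by (cases x; cases y)
  define z where "z = (if a = c then (a, if b < e then b + 1 else b - 1)
                                 else (if a < c then a + 1 else a - 1, b))"
  have "grid_E s t x z" "z \<in> grid_V s t" "manhattan z y = n"
    using assms unfolding xy z_def by (auto simp: grid_E_iff mem_grid_V_iff manhattan_def)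
  then show thesis by (rule that)
qed

lemma walk_n_grid_manhattan:
  "x \<in> grid_V s t \<Longrightarrow> y \<in> grid_V s t \<Longrightarrow> walk_n (grid_E s t) (manhattan x y) x y"
proof (induction "manhattan x y" arbitrary: x)
  case (Suc n)
  then obtain z where "grid_E s t x z" "z \<in> grid_V s t" "manhattan z y = n"
    by (metis grid_step_towards)
  with Suc show ?case by (metis walk_n.simps(2))
qed simp

lemma gdist_grid_eq_manhattan:
  "x \<in> grid_V s t \<Longrightarrow> y \<in> grid_V s t \<Longrightarrow> gdist (grid_E s t) x y = manhattan x y"
  unfolding gdist_def
  by (rule Least_equality) (auto intro: walk_n_grid_manhattan dest: walk_n_grid_imp_manhattan_le)

lemma frac_dim_wrt_cong:
  assumes "\<And>x y. x \<in> V \<Longrightarrow> y \<in> V \<Longrightarrow> d x y = d' x y"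
  shows "frac_dim_wrt V d = frac_dim_wrt V d'"
proof -
  have "R_set V d x y = R_set V d' x y" if "x \<in> V" "y \<in> V" for x y
    using assms that unfolding R_set_def by auto
  then have "resolving_fun V d = resolving_fun V d'"
    unfolding resolving_fun_def by (intro ext) auto
  then show ?thesis unfolding frac_dim_wrt_def by simp
qed

lemma resolving_fun_const_one:
  assumes "finite V" "\<And>x y. x \<in> V \<Longrightarrow> y \<in> V \<Longrightarrow> x \<noteq> y \<Longrightarrow> d x x \<noteq> d y x"
  shows "resolving_fun V d (\<lambda>_. 1)"
  unfolding resolving_fun_def
proof (intro conjI ballI impI)
  fix x y assume "x \<in> V" "y \<in> V" "x \<noteq> y"
  with assms have "x \<in> R_set V d x y" "finite (R_set V d x y)"
    unfolding R_set_def by auto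
  then show "1 \<le> sum (\<lambda>_. 1::real) (R_set V d x y)"
    by (auto simp: Suc_le_eq card_gt_0_iff)
qed auto

lemma bdd_below_resolving_sums: "bdd_below {sum g V | g. resolving_fun V d g}"
  unfolding bdd_below_def resolving_fun_def
  by (rule exI[of _ 0]) (auto intro: sum_nonneg)

lemma frac_dim_wrt_le: "resolving_fun V d g \<Longrightarrow> frac_dim_wrt V d \<le> sum g V"
  unfolding frac_dim_wrt_def by (rule cInf_lower) (auto intro: bdd_below_resolving_sums)

lemma frac_dim_wrt_mono:
  assumes "finite V" "resolving_fun V d' g\<^sub>0"
    and "\<And>x y. x \<in> V \<Longrightarrow> y \<in> V \<Longrightarrow> R_set V d' x y \<subseteq> R_set V d x y"
  shows "frac_dim_wrt V d \<le> frac_dim_wrt V d'"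
  unfolding frac_dim_wrt_def
proof (rule cInf_superset_mono)
  show "{sum g V |g. resolving_fun V d' g} \<noteq> {}" using assms(2) by auto
  have "resolving_fun V d g" if g: "resolving_fun V d' g" for g
  proof -
    have "sum g (R_set V d' x y) \<le> sum g (R_set V d x y)" if "x \<in> V" "y \<in> V" for x y
      using assms(1,3) g that unfolding resolving_fun_def R_set_def
      by (intro sum_mono2) auto
    with g show ?thesis unfolding resolving_fun_def by (meson order_trans)
  qed
  then show "{sum g V |g. resolving_fun V d' g} \<subseteq> {sum g V |g. resolving_fun V d g}" by auto
qed (rule bdd_below_resolving_sums)

lemma frac_dim_wrt_le_card_div:
  assumes "finite V" "S \<subseteq> V" "0 < k"
    and "\<forall>x\<in>V. \<forall>y\<in>V. x \<noteq> y \<longrightarrow> k \<le> card {c \<in> S. d x c \<noteq> d y c}"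
  shows "frac_dim_wrt V d \<le> card S / k"
proof -
  define g where "g z = (if z \<in> S then 1 / k else 0)" for z
  have sum_g: "sum g A = card (A \<inter> S) / k" if "finite A" for A
    using that unfolding g_def by (simp add: sum.If_cases)
  have "resolving_fun V d g"
    unfolding resolving_fun_def
  proof (intro conjI ballI impI)
    fix x y assume xy: "x \<in> V" "y \<in> V" "x \<noteq> y"
    have "R_set V d x y \<inter> S = {c \<in> S. d x c \<noteq> d y c}"
      using assms(2) unfolding R_set_def by auto
    with assms(1,3,4) xy show "1 \<le> sum g (R_set V d x y)"
      by (simp add: sum_g R_set_def)
  qed (use assms(3) in \<open>auto simp: g_def\<close>)
  then have "frac_dim_wrt V d \<le> sum g V" by (rule frac_dim_wrt_le)
  also have "\<dots> = card S / k"
    using assms(1,2) by (simp add: sum_g Int_absorb1)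
  finally show ?thesis .
qed

text \<open>A weighted list of vertex pairs encodes a solution of the dual linear program;
  \<open>pair_cover d L z \<le> 1\<close> is its constraint at the vertex \<open>z\<close>.\<close>

definition pair_packing :: "'a set \<Rightarrow> (real \<times> 'a \<times> 'a) list \<Rightarrow> bool" where
  "pair_packing V L \<longleftrightarrow> (\<forall>(w, x, y)\<in>set L. x \<in> V \<and> y \<in> V \<and> x \<noteq> y \<and> 0 \<le> w)"

definition pair_cover :: "('a \<Rightarrow> 'a \<Rightarrow> nat) \<Rightarrow> (real \<times> 'a \<times> 'a) list \<Rightarrow> 'a \<Rightarrow> real" where
  "pair_cover d L z = (\<Sum>(w, x, y)\<leftarrow>L. if d x z \<noteq> d y z then w else 0)"

lemma pair_packing_append [simp]:
  "pair_packing V (L @ M) \<longleftrightarrow> pair_packing V L \<and> pair_packing V M"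
  by (simp add: pair_packing_def ball_Un)

lemma pair_cover_Nil [simp]: "pair_cover d [] z = 0"
  by (simp add: pair_cover_def)

lemma pair_cover_Cons [simp]:
  "pair_cover d ((w, x, y) # L) z = (if d x z \<noteq> d y z then w else 0) + pair_cover d L z"
  by (simp add: pair_cover_def)

lemma pair_cover_append [simp]: "pair_cover d (L @ M) z = pair_cover d L z + pair_cover d M z"
  by (simp add: pair_cover_def)

lemma sum_R_set: "finite V \<Longrightarrow> sum g (R_set V d x y) = (\<Sum>z\<in>V. if d x z \<noteq> d y z then g z else 0)"
  unfolding R_set_def by (simp add: sum.inter_filter)

lemma scaled_sum_R_set:
  fixes g :: "'a \<Rightarrow> real"
  assumes "finite V"
  shows "w * sum g (R_set V d x y) = (\<Sum>z\<in>V. g z * (if d x z \<noteq> d y z then w else 0))"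
  by (auto simp: sum_R_set[OF assms] sum_distrib_left intro!: sum.cong)

lemma sum_weights_le_sum_resolving_fun:
  assumes "finite V" "resolving_fun V d g" "pair_packing V L"
    and "\<And>z. z \<in> V \<Longrightarrow> pair_cover d L z \<le> 1"
  shows "(\<Sum>(w, x, y)\<leftarrow>L. w) \<le> sum g V"
proof -
  have "(\<Sum>(w, x, y)\<leftarrow>L. w) \<le> (\<Sum>(w, x, y)\<leftarrow>L. w * sum g (R_set V d x y))"
  proof (rule sum_list_mono)
    fix p assume "p \<in> set L"
    then obtain w x y where p: "p = (w, x, y)" "x \<in> V" "y \<in> V" "x \<noteq> y" "0 \<le> w"
      using assms(3) unfolding pair_packing_def by (cases p) auto
    with assms(2) have "1 \<le> sum g (R_set V d x y)" unfolding resolving_fun_def by auto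
    with p show "(case p of (w, x, y) \<Rightarrow> w) \<le> (case p of (w, x, y) \<Rightarrow> w * sum g (R_set V d x y))"
      using mult_left_mono[of 1 "sum g (R_set V d x y)" w] by simp
  qed
  also have "\<dots> = (\<Sum>z\<in>V. g z * pair_cover d L z)"
  proof (induction L)
    case (Cons p L)
    obtain w x y where "p = (w, x, y)" by (cases p)
    with Cons show ?case
      by (simp add: scaled_sum_R_set[OF assms(1)] distrib_left sum.distrib)
  qed simp
  also have "\<dots> \<le> (\<Sum>z\<in>V. g z)"
    using assms(2,4) unfolding resolving_fun_def by (intro sum_mono mult_left_le) auto
  finally show ?thesis .
qed

lemma frac_dim_wrt_ge_packing:
  assumes "finite V" "resolving_fun V d g\<^sub>0" "pair_packing V L"
    and "\<And>z. z \<in> V \<Longrightarrow> pair_cover d L z \<le> 1"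
  shows "(\<Sum>(w, x, y)\<leftarrow>L. w) \<le> frac_dim_wrt V d"
  unfolding frac_dim_wrt_def using assms
  by (intro cInf_greatest) (auto intro: sum_weights_le_sum_resolving_fun)

definition grid_reflect :: "nat \<Rightarrow> nat \<Rightarrow> bool \<Rightarrow> bool \<Rightarrow> nat \<times> nat \<Rightarrow> nat \<times> nat" where
  "grid_reflect s t fx fy p =
     (if fx then s - 1 - fst p else fst p, if fy then t - 1 - snd p else snd p)"

definition grid_reflection_invariant :: "nat \<Rightarrow> nat \<Rightarrow> (nat \<times> nat \<Rightarrow> nat \<times> nat \<Rightarrow> nat) \<Rightarrow> bool" where
  "grid_reflection_invariant s t d \<longleftrightarrow>
     (\<forall>fx fy. \<forall>p\<in>grid_V s t. \<forall>z\<in>grid_V s t.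
        d (grid_reflect s t fx fy p) z = d p (grid_reflect s t fx fy z))"

lemma grid_reflect_in_grid_V: "p \<in> grid_V s t \<Longrightarrow> grid_reflect s t fx fy p \<in> grid_V s t"
  by (auto simp: grid_reflect_def mem_grid_V_iff)

lemma grid_reflect_involution:
  "p \<in> grid_V s t \<Longrightarrow> grid_reflect s t fx fy (grid_reflect s t fx fy p) = p"
  by (cases p) (auto simp: grid_reflect_def mem_grid_V_iff)

lemma inj_on_grid_reflect: "inj_on (grid_reflect s t fx fy) (grid_V s t)"
  by (metis inj_onI grid_reflect_involution)

lemma grid_reflection_invariant_manhattan: "grid_reflection_invariant s t manhattan"
  unfolding grid_reflection_invariant_def
  by (auto simp: grid_reflect_def manhattan_def mem_grid_V_iff)

definition reflect_packing ::
  "nat \<Rightarrow> nat \<Rightarrow> bool \<Rightarrow> bool \<Rightarrow> (real \<times> (nat \<times> nat) \<times> nat \<times> nat) list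
     \<Rightarrow> (real \<times> (nat \<times> nat) \<times> nat \<times> nat) list" where
  "reflect_packing s t fx fy L =
     map (\<lambda>(w, x, y). (w, grid_reflect s t fx fy x, grid_reflect s t fx fy y)) L"

lemma sum_weights_reflect_packing:
  "(\<Sum>(w, x, y)\<leftarrow>reflect_packing s t fx fy L. w) = (\<Sum>(w, x, y)\<leftarrow>L. w)"
  by (induction L) (auto simp: reflect_packing_def)

lemma pair_packing_reflect_packing:
  "pair_packing (grid_V s t) L \<Longrightarrow> pair_packing (grid_V s t) (reflect_packing s t fx fy L)"
  unfolding pair_packing_def reflect_packing_def
  by (auto simp: grid_reflect_in_grid_V dest: inj_onD[OF inj_on_grid_reflect])

lemma pair_cover_reflect_packing:
  assumes "grid_reflection_invariant s t d" "pair_packing (grid_V s t) L" "z \<in> grid_V s t"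
  shows "pair_cover d (reflect_packing s t fx fy L) z = pair_cover d L (grid_reflect s t fx fy z)"
  using assms(2)
  by (induction L) (auto simp: reflect_packing_def pair_packing_def assms(3)
      assms(1)[unfolded grid_reflection_invariant_def])

definition corner_packing ::
  "nat \<Rightarrow> nat \<Rightarrow> (real \<times> (nat \<times> nat) \<times> nat \<times> nat) list \<Rightarrow> (real \<times> (nat \<times> nat) \<times> nat \<times> nat) list"
  where
  "corner_packing s t L = reflect_packing s t False False L @ reflect_packing s t True False L @
     reflect_packing s t False True L @ reflect_packing s t True True L"

definition mirrored_cover ::
  "nat \<Rightarrow> nat \<Rightarrow> (nat \<times> nat \<Rightarrow> nat \<times> nat \<Rightarrow> nat) \<Rightarrow> (real \<times> (nat \<times> nat) \<times> nat \<times> nat) list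
     \<Rightarrow> nat \<Rightarrow> nat \<Rightarrow> real" where
  "mirrored_cover s t d L a b =
     pair_cover d L (a, b) + pair_cover d L (s - 1 - a, b) + pair_cover d L (a, t - 1 - b)
       + pair_cover d L (s - 1 - a, t - 1 - b)"

lemma pair_cover_corner_packing:
  assumes "grid_reflection_invariant s t d" "pair_packing (grid_V s t) L" "(a, b) \<in> grid_V s t"
  shows "pair_cover d (corner_packing s t L) (a, b) = mirrored_cover s t d L a b"
  unfolding corner_packing_def pair_cover_append pair_cover_reflect_packing[OF assms]
  by (simp add: grid_reflect_def mirrored_cover_def add.assoc)

lemma frac_dim_wrt_grid_ge_corner_packing:
  assumes "resolving_fun (grid_V s t) d g\<^sub>0" "grid_reflection_invariant s t d"
    and "pair_packing (grid_V s t) L"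
    and "\<And>a b. a < s \<Longrightarrow> b < t \<Longrightarrow> mirrored_cover s t d L a b \<le> 1"
  shows "4 * (\<Sum>(w, x, y)\<leftarrow>L. w) \<le> frac_dim_wrt (grid_V s t) d"
proof -
  have "(\<Sum>(w, x, y)\<leftarrow>corner_packing s t L. w) \<le> frac_dim_wrt (grid_V s t) d"
  proof (rule frac_dim_wrt_ge_packing[OF finite_grid_V assms(1)])
    show "pair_packing (grid_V s t) (corner_packing s t L)"
      using assms(3) by (simp add: corner_packing_def pair_packing_reflect_packing)
    fix z assume "z \<in> grid_V s t"
    then show "pair_cover d (corner_packing s t L) z \<le> 1"
      using pair_cover_corner_packing[OF assms(2,3)] assms(4)
      by (cases z) (simp add: mem_grid_V_iff)
  qed
  then show ?thesis by (simp add: corner_packing_def sum_weights_reflect_packing)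
qed

lemma frac_dim_grid_eq_manhattan:
  "frac_dim (grid_V s t) (grid_E s t) = frac_dim_wrt (grid_V s t) manhattan"
  unfolding frac_dim_def by (rule frac_dim_wrt_cong) (simp add: gdist_grid_eq_manhattan)

definition trunc_manhattan :: "nat \<times> nat \<Rightarrow> nat \<times> nat \<Rightarrow> nat" where
  "trunc_manhattan p q = min (manhattan p q) 2"

lemma frac_dim1_grid_eq_trunc_manhattan:
  "frac_dim1 (grid_V s t) (grid_E s t) = frac_dim_wrt (grid_V s t) trunc_manhattan"
  unfolding frac_dim1_def trunc_manhattan_def
  by (rule frac_dim_wrt_cong) (simp add: gdist_grid_eq_manhattan)

lemma grid_reflection_invariant_trunc_manhattan: "grid_reflection_invariant s t trunc_manhattan"
  using grid_reflection_invariant_manhattan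
  unfolding grid_reflection_invariant_def trunc_manhattan_def by simp

lemma resolving_fun_grid_manhattan: "resolving_fun (grid_V s t) manhattan (\<lambda>_. 1)"
  by (rule resolving_fun_const_one) auto

lemma resolving_fun_grid_trunc_manhattan: "resolving_fun (grid_V s t) trunc_manhattan (\<lambda>_. 1)"
  by (rule resolving_fun_const_one) (auto simp: trunc_manhattan_def)

lemma frac_dim_le_frac_dim1_grid:
  "frac_dim (grid_V s t) (grid_E s t) \<le> frac_dim1 (grid_V s t) (grid_E s t)"
  unfolding frac_dim_grid_eq_manhattan frac_dim1_grid_eq_trunc_manhattan
  by (rule frac_dim_wrt_mono[OF finite_grid_V resolving_fun_grid_trunc_manhattan])
    (auto simp: R_set_def trunc_manhattan_def)

lemma frac_dim_wrt_grid_manhattan_le_2: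
  assumes "2 \<le> s" "0 < t"
  shows "frac_dim_wrt (grid_V s t) manhattan \<le> 2"
proof -
  let ?S = "{(0, 0), (s - 1, 0)} :: (nat \<times> nat) set"
  have resolves: "{c \<in> ?S. manhattan x c \<noteq> manhattan y c} \<noteq> {}"
    if "x \<in> grid_V s t" "y \<in> grid_V s t" "x \<noteq> y" for x y
  proof -
    from that have "manhattan x (0, 0) \<noteq> manhattan y (0, 0)
                    \<or> manhattan x (s - 1, 0) \<noteq> manhattan y (s - 1, 0)"
      by (cases x; cases y) (auto simp: manhattan_def mem_grid_V_iff)
    then show ?thesis by auto
  qed
  have "frac_dim_wrt (grid_V s t) manhattan \<le> card ?S / real 1"
    by (rule frac_dim_wrt_le_card_div)
      (use assms resolves in \<open>auto simp: mem_grid_V_iff Suc_le_eq card_gt_0_iff\<close>)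
  also have "\<dots> = 2" using assms by simp
  finally show ?thesis .
qed

definition corner_pair :: "(real \<times> (nat \<times> nat) \<times> nat \<times> nat) list" where
  "corner_pair = [(1/2, (1, 0), (0, 1))]"

lemma manhattan_corner_pair_resolves:
  "manhattan (1, 0) (a, b) \<noteq> manhattan (0, 1) (a, b) \<longleftrightarrow> (a = 0) \<noteq> (b = 0)"
  by (auto simp: manhattan_def)

lemma frac_dim_wrt_grid_manhattan_ge_2:
  assumes "2 \<le> s" "2 \<le> t"
  shows "2 \<le> frac_dim_wrt (grid_V s t) manhattan"
proof -
  have "4 * (\<Sum>(w, x, y)\<leftarrow>corner_pair. w) \<le> frac_dim_wrt (grid_V s t) manhattan"
  proof (rule frac_dim_wrt_grid_ge_corner_packing[OF resolving_fun_grid_manhattan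
        grid_reflection_invariant_manhattan])
    show "pair_packing (grid_V s t) corner_pair"
      using assms by (simp add: pair_packing_def corner_pair_def mem_grid_V_iff)
    fix a b assume "a < s" "b < t"
    with assms show "mirrored_cover s t manhattan corner_pair a b \<le> 1"
      unfolding mirrored_cover_def corner_pair_def pair_cover_Cons pair_cover_Nil
        manhattan_corner_pair_resolves
      by auto
  qed
  then show ?thesis by (simp add: corner_pair_def)
qed

lemma frac_dim_grid:
  assumes "2 \<le> s" "2 \<le> t"
  shows "frac_dim (grid_V s t) (grid_E s t) = 2"
  using frac_dim_wrt_grid_manhattan_le_2 frac_dim_wrt_grid_manhattan_ge_2 assms
  unfolding frac_dim_grid_eq_manhattan by (simp add: order_antisym)

definition corner_triple :: "(real \<times> (nat \<times> nat) \<times> nat \<times> nat) list" where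
  "corner_triple = [(1/4, (1, 0), (0, 1)), (1/4, (0, 0), (0, 1)), (1/8, (0, 0), (1, 1))]"

lemma pair_cover_corner_triple_table:
  "pair_cover trunc_manhattan corner_triple (0, 0) = 3/8"
  "pair_cover trunc_manhattan corner_triple (1, 0) = 1/2"
  "pair_cover trunc_manhattan corner_triple (2, 0) = 1/4"
  "pair_cover trunc_manhattan corner_triple (0, 1) = 1/2"
  "pair_cover trunc_manhattan corner_triple (1, 1) = 3/8"
  "pair_cover trunc_manhattan corner_triple (2, 1) = 1/8"
  "pair_cover trunc_manhattan corner_triple (0, 2) = 1/2"
  "pair_cover trunc_manhattan corner_triple (1, 2) = 1/8"
  "pair_cover trunc_manhattan corner_triple (2, 2) = 0"
  by (simp_all add: corner_triple_def trunc_manhattan_def manhattan_def)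

lemma trunc_manhattan_far:
  assumes "fst p \<le> 1" "snd p \<le> 1" "3 \<le> a \<or> 3 \<le> b"
  shows "trunc_manhattan p (a, b) = 2"
  using assms unfolding trunc_manhattan_def manhattan_def by auto

lemma pair_cover_corner_triple_far:
  "3 \<le> a \<or> 3 \<le> b \<Longrightarrow> pair_cover trunc_manhattan corner_triple (a, b) = 0"
  by (simp add: corner_triple_def trunc_manhattan_far)

lemma pair_cover_corner_triple_le_half: "pair_cover trunc_manhattan corner_triple z \<le> 1/2"
proof (cases "3 \<le> fst z \<or> 3 \<le> snd z")
  case False
  have "\<forall>a\<in>{..<3}. \<forall>b\<in>{..<3}. pair_cover trunc_manhattan corner_triple (a, b) \<le> 1/2"
    by (simp add: lessThan_nat_numeral lessThan_Suc
        pair_cover_corner_triple_table pair_cover_corner_triple_table[unfolded One_nat_def])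
  with False show ?thesis by (cases z) auto
qed (cases z, simp add: pair_cover_corner_triple_far)

lemma mirrored_cover_corner_triple_small_grids:
  "\<forall>(s, t)\<in>{(5, 2), (4, 3), (5, 3), (4, 4), (5, 4), (5, 5)}. \<forall>a\<in>{..<s}. \<forall>b\<in>{..<t}.
     mirrored_cover s t trunc_manhattan corner_triple a b \<le> 1"
  by (simp add: mirrored_cover_def lessThan_nat_numeral lessThan_Suc pair_cover_corner_triple_far
      pair_cover_corner_triple_table pair_cover_corner_triple_table[unfolded One_nat_def])

lemma mirrored_cover_corner_triple:
  assumes "t \<le> s" "2 \<le> t" "(s, t) \<notin> {(2, 2), (3, 2), (4, 2), (3, 3)}" "a < s" "b < t"
  shows "mirrored_cover s t trunc_manhattan corner_triple a b \<le> 1"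
proof (cases "6 \<le> s")
  case True
  with assms(4) have "3 \<le> a \<or> 3 \<le> s - 1 - a" by linarith
  then show ?thesis
    using pair_cover_corner_triple_le_half[of "(a, b)"] pair_cover_corner_triple_le_half[of "(a, t - 1 - b)"]
      pair_cover_corner_triple_le_half[of "(s - 1 - a, b)"]
      pair_cover_corner_triple_le_half[of "(s - 1 - a, t - 1 - b)"]
    by (auto simp: mirrored_cover_def pair_cover_corner_triple_far)
next
  case False
  with assms(1-3) have "(s, t) \<in> {(5, 2), (4, 3), (5, 3), (4, 4), (5, 4), (5, 5)}"
    by simp arith
  with mirrored_cover_corner_triple_small_grids assms(4,5) show ?thesis by fastforce
qed

lemma frac_dim1_grid_ge_5_halves:
  assumes "t \<le> s" "2 \<le> t" "(s, t) \<notin> {(2, 2), (3, 2), (4, 2), (3, 3)}"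
  shows "5/2 \<le> frac_dim1 (grid_V s t) (grid_E s t)"
proof -
  have "4 * (\<Sum>(w, x, y)\<leftarrow>corner_triple. w) \<le> frac_dim_wrt (grid_V s t) trunc_manhattan"
  proof (rule frac_dim_wrt_grid_ge_corner_packing[OF resolving_fun_grid_trunc_manhattan
        grid_reflection_invariant_trunc_manhattan])
    show "pair_packing (grid_V s t) corner_triple"
      using assms(1,2) by (simp add: pair_packing_def corner_triple_def mem_grid_V_iff)
  qed (rule mirrored_cover_corner_triple[OF assms])
  then show ?thesis
    unfolding frac_dim1_grid_eq_trunc_manhattan by (simp add: corner_triple_def)
qed

lemma frac_dim_wrt_small_grids_trunc_manhattan_le_2:
  assumes "(s, t) \<in> {(2, 2), (3, 2), (4, 2), (3, 3)}"
  shows "frac_dim_wrt (grid_V s t) trunc_manhattan \<le> 2"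
proof -
  have "frac_dim_wrt (grid_V 2 2) trunc_manhattan
          \<le> card ({(0, 0), (1, 0)} :: (nat \<times> nat) set) / real 1"
    and "frac_dim_wrt (grid_V 3 2) trunc_manhattan
          \<le> card ({(0, 0), (2, 0)} :: (nat \<times> nat) set) / real 1"
    and "frac_dim_wrt (grid_V 4 2) trunc_manhattan
          \<le> card ({(1, 0), (2, 0), (1, 1), (2, 1)} :: (nat \<times> nat) set) / real 2"
    and "frac_dim_wrt (grid_V 3 3) trunc_manhattan
          \<le> card ({(1, 0), (0, 1), (2, 1), (1, 2)} :: (nat \<times> nat) set) / real 2"
    by (rule frac_dim_wrt_le_card_div[OF finite_grid_V]; (unfold grid_V_eq)?; code_simp)+
  with assms show ?thesis by auto
qed

lemma frac_dim1_small_grids: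
  assumes "(s, t) \<in> {(2, 2), (3, 2), (4, 2), (3, 3)}"
  shows "frac_dim1 (grid_V s t) (grid_E s t) = 2"
proof -
  from assms have "frac_dim (grid_V s t) (grid_E s t) = 2" by (auto intro: frac_dim_grid)
  with frac_dim_le_frac_dim1_grid[of s t] frac_dim_wrt_small_grids_trunc_manhattan_le_2[OF assms]
  show ?thesis unfolding frac_dim1_grid_eq_trunc_manhattan by linarith
qed

theorem proposition3p10:
  fixes s t :: nat
  assumes "s \<ge> t" and "t \<ge> 2"
  shows "frac_dim1 (grid_V s t) (grid_E s t) = frac_dim (grid_V s t) (grid_E s t)
           \<longleftrightarrow> (s, t) \<in> {(2, 2), (3, 2), (4, 2), (3, 3)}"
proof
  assume eq: "frac_dim1 (grid_V s t) (grid_E s t) = frac_dim (grid_V s t) (grid_E s t)"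
  show "(s, t) \<in> {(2, 2), (3, 2), (4, 2), (3, 3)}"
  proof (rule ccontr)
    assume "(s, t) \<notin> {(2, 2), (3, 2), (4, 2), (3, 3)}"
    with assms have "5/2 \<le> frac_dim1 (grid_V s t) (grid_E s t)"
      by (intro frac_dim1_grid_ge_5_halves)
    moreover have "frac_dim (grid_V s t) (grid_E s t) = 2"
      using assms by (intro frac_dim_grid) auto
    ultimately show False using eq by simp
  qed
next
  assume "(s, t) \<in> {(2, 2), (3, 2), (4, 2), (3, 3)}"
  with assms show "frac_dim1 (grid_V s t) (grid_E s t) = frac_dim (grid_V s t) (grid_E s t)"
    by (simp add: frac_dim1_small_grids frac_dim_grid)
qed

end
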